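(* Let $\mathbf T$ be a countable homogeneous tournament and $\mathbf T^*$ an expansion of $\mathbf T$ as in the context. If $\mathrm{Age}(\mathbf T^* )$ has the expansion property relative to $\mathrm{Age}(\mathbf T)$, then for every positive integer $n$, $\mathrm{Age}(\mathbf T[I_n]^* )$ has the expansion property relative to $\mathrm{Age}(\mathbf T[I_n])$, where $\mathbf T[I_n]$ denotes the reduct of $\mathbf T[I_n]^*$ to the language $\{E\}$.
   Context: The age $\mathrm{Age}(\mathbf F)$ of a structure $\mathbf F$ is the class of finite structures embeddable in $\mathbf F$. Expansion property: let $L\subseteq L^*$ be relational languages, $\mathcal K$ a class of finite $L$-structures and $\mathcal K^*$ a class of finite $L^*$-structures whose $L$-reducts lie in $\mathcal K$. $\mathcal K^*$ has the expansion property relative to $\mathcal K$ if for every $\mathbf A\in\mathcal K$ there is $\mathbf B\in\mathcal K$ such that for all $\mathbf A^*,\mathbf B^*\in\mathcal K^*$ whose $L$-reducts are $\mathbf A$ and $\mathbf B$ respectively, $\mathbf A^*$ embeds into $\mathbf B^*$. A tournament is a directed graph in which every pair of distinct vertices carries exactly one directed edge; it is homogeneous if every isomorphism between finite substructures extends to an automorphism. $\mathbf T=(T,E^{\mathbf T})$ is a countable homogeneous tournament, and $\mathbf T^*$ is an expansion of $\mathbf T$ to a countable relational language $L_{\mathbf T^*}\supseteq\{E,<\}$ in which $<$ is interpreted as a linear order $<^*$ on $T$. For a positive integer $n$, $[n]=\{0,\dots,n-1\}$. The structure $\mathbf T[I_n]^*$ has universe $T\times[n]$ and language $L_{\mathbf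 T^*}\cup\{L_0,\dots,L_{n-1}\}$ ($L_i$ new unary symbols), interpreted as follows: $E((x,i),(y,j))$ iff $E^{\mathbf T}(x,y)$; for each $m$-ary $R\in L_{\mathbf T^*}\setminus\{E,<\}$, $R((x_1,i_1),\dots,(x_m,i_m))$ iff $R^{\mathbf T^*}(x_1,\dots,x_m)$; $(x,i)<(y,j)$ iff $x<^*y$, or $x=y$ and $i<j$; and $L_i(x,j)$ iff $j=i$. *)

theory Defs
  imports Main "HOL-Library.Countable_Set"
begin

type_synonym ('a, 's) rstruct = "'a set \<times> ('s \<Rightarrow> 'a list \<Rightarrow> bool)"

definition is_struct :: "'s set \<Rightarrow> ('s \<Rightarrow> nat) \<Rightarrow> ('a, 's) rstruct \<Rightarrow> bool" where
  "is_struct L ar M \<longleftrightarrow>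
     (\<forall>s xs. snd M s xs \<longrightarrow> s \<in> L \<and> length xs = ar s \<and> set xs \<subseteq> fst M)"

definition preserves ::
  "'s set \<Rightarrow> ('s \<Rightarrow> nat) \<Rightarrow> ('a \<Rightarrow> 'b) \<Rightarrow> 'a set \<Rightarrow> ('a, 's) rstruct \<Rightarrow> ('b, 's) rstruct \<Rightarrow> bool" where
  "preserves L ar f A M N \<longleftrightarrow>
     (\<forall>s\<in>L. \<forall>xs. length xs = ar s \<and> set xs \<subseteq> A \<longrightarrow> (snd M s xs \<longleftrightarrow> snd N s (map f xs)))"

definition is_embedding ::
  "'s set \<Rightarrow> ('s \<Rightarrow> nat) \<Rightarrow> ('a \<Rightarrow> 'b) \<Rightarrow> ('a, 's) rstruct \<Rightarrow> ('b, 's) rstruct \<Rightarrow> bool" where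
  "is_embedding L ar f M N \<longleftrightarrow>
     inj_on f (fst M) \<and> f ` fst M \<subseteq> fst N \<and> preserves L ar f (fst M) M N"

definition embeds :: "'s set \<Rightarrow> ('s \<Rightarrow> nat) \<Rightarrow> ('a, 's) rstruct \<Rightarrow> ('b, 's) rstruct \<Rightarrow> bool" where
  "embeds L ar M N \<longleftrightarrow> (\<exists>f. is_embedding L ar f M N)"

text \<open>The age: all finite L-structures embeddable in F (represented, up to
  isomorphism, by structures whose carrier is a finite set of naturals).\<close>
definition age :: "'s set \<Rightarrow> ('s \<Rightarrow> nat) \<Rightarrow> ('a, 's) rstruct \<Rightarrow> (nat, 's) rstruct set" where
  "age L ar F = {A. finite (fst A) \<and> is_struct L ar A \<and> embeds L ar A F}"

definition reduct :: "'s set \<Rightarrow> ('a, 's) rstruct \<Rightarrow> ('a, 's) rstruct" where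
  "reduct L M = (fst M, \<lambda>s xs. s \<in> L \<and> snd M s xs)"

definition expansion_property ::
  "'s set \<Rightarrow> 's set \<Rightarrow> ('s \<Rightarrow> nat) \<Rightarrow> ('a, 's) rstruct set \<Rightarrow> ('a, 's) rstruct set \<Rightarrow> bool" where
  "expansion_property L Ls ar K Ks \<longleftrightarrow>
     (\<forall>A\<in>K. \<exists>B\<in>K. \<forall>As\<in>Ks. \<forall>Bs\<in>Ks.
        reduct L As = A \<longrightarrow> reduct L Bs = B \<longrightarrow> embeds Ls ar As Bs)"

definition homogeneous :: "'s set \<Rightarrow> ('s \<Rightarrow> nat) \<Rightarrow> ('a, 's) rstruct \<Rightarrow> bool" where
  "homogeneous L ar F \<longleftrightarrow>
     (\<forall>A f. A \<subseteq> fst F \<and> finite A \<and> inj_on f A \<and> f ` A \<subseteq> fst F \<and> preserves L ar f A F F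
        \<longrightarrow> (\<exists>g. bij_betw g (fst F) (fst F) \<and> preserves L ar g (fst F) F F
                 \<and> (\<forall>x\<in>A. g x = f x)))"

definition is_tournament :: "'s \<Rightarrow> ('a, 's) rstruct \<Rightarrow> bool" where
  "is_tournament E F \<longleftrightarrow>
     (\<forall>x\<in>fst F. \<forall>y\<in>fst F.
        (snd F E [x, y] \<longrightarrow> x \<noteq> y) \<and> (x \<noteq> y \<longrightarrow> (snd F E [x, y] \<longleftrightarrow> \<not> snd F E [y, x])))"

definition strict_linear_order_on :: "'a set \<Rightarrow> ('a \<Rightarrow> 'a \<Rightarrow> bool) \<Rightarrow> bool" where
  "strict_linear_order_on C r \<longleftrightarrow>
     (\<forall>x\<in>C. \<not> r x x) \<and>
     (\<forall>x\<in>C. \<forall>y\<in>C. \<forall>z\<in>C. r x y \<and> r y z \<longrightarrow> r x z) \<and>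
     (\<forall>x\<in>C. \<forall>y\<in>C. x \<noteq> y \<longrightarrow> r x y \<or> r y x)"

text \<open>The language of T[I_n]*: old symbols Inl s, new unary symbols L_i = Inr i.\<close>
definition blowup_lang :: "'s set \<Rightarrow> nat \<Rightarrow> ('s + nat) set" where
  "blowup_lang Ls n = Inl ` Ls \<union> Inr ` {..<n}"

definition blowup_ar :: "('s \<Rightarrow> nat) \<Rightarrow> ('s + nat) \<Rightarrow> nat" where
  "blowup_ar ar = case_sum ar (\<lambda>_. 1)"

definition blowup :: "'s \<Rightarrow> nat \<Rightarrow> ('t, 's) rstruct \<Rightarrow> ('t \<times> nat, 's + nat) rstruct" where
  "blowup lt n M =
     (fst M \<times> {..<n},
      \<lambda>s xs. case s of
          Inl r \<Rightarrow> set xs \<subseteq> fst M \<times> {..<n} \<and>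
                   (if r = lt
                    then (\<exists>x i y j. xs = [(x, i), (y, j)] \<and> (snd M lt [x, y] \<or> (x = y \<and> i < j)))
                    else snd M r (map fst xs))
        | Inr i \<Rightarrow> (\<exists>x. x \<in> fst M \<and> i < n \<and> xs = [(x, i)]))"

end

theory Submission
  imports Defs
begin

text \<open>
  Since T is a tournament, two points of T[I_n] are non-adjacent exactly when they lie in the same
  column {x} \<times> [n]. So an embedding of a finite E-structure A into T[I_n] is determined, up to
  labels, by the columns of A and the subtournament of T they span; one representative per column
  gives A0 \<in> Age(T). Let B0 be the witness of the expansion property for A0 and put B = B0[I_n].
  Expansions A* and B* of A and B in Age(T[I_n]*) induce, through their embeddings into T[I_n]*,
  expansions of A0 and B0 in Age(T*); the unary predicates L_i force every column of B* to carry
  every label. An embedding f of the induced expansions lifts to A* \<rightarrow> B*: send u to the point of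
  the column f(\<rho> u) with the label of u.
\<close>

lemma length_eq_2_iff: "length xs = 2 \<longleftrightarrow> (\<exists>u v. xs = [u, v])"
  by (auto simp: numeral_2_eq_2 length_Suc_conv)

lemma length_eq_1_iff: "length xs = Suc 0 \<longleftrightarrow> (\<exists>u. xs = [u])"
  by (auto simp: length_Suc_conv)

lemma fst_reduct [simp]: "fst (reduct L M) = fst M"
  and snd_reduct [simp]: "snd (reduct L M) s xs \<longleftrightarrow> s \<in> L \<and> snd M s xs"
  by (simp_all add: reduct_def)

lemma preserves_pair:
  assumes "preserves L ar f X M N" "s \<in> L" "ar s = 2" "u \<in> X" "v \<in> X"
  shows "snd M s [u, v] \<longleftrightarrow> snd N s [f u, f v]"
  using assms unfolding preserves_def by (auto dest: bspec[of _ _ s] spec[of _ "[u, v]"])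

lemma preserves_reduct_target:
  assumes "L \<subseteq> L'"
  shows "preserves L ar f X M (reduct L' N) \<longleftrightarrow> preserves L ar f X M N"
  using assms by (auto simp: preserves_def)

lemma is_tournament_age:
  assumes "is_tournament E T" "ar E = 2" "B \<in> age {E} ar T"
  shows "is_tournament E B"
  unfolding is_tournament_def
proof (intro ballI)
  obtain g where g: "inj_on g (fst B)" "g ` fst B \<subseteq> fst T" "preserves {E} ar g (fst B) B T"
    using assms(3) by (auto simp: age_def embeds_def is_embedding_def)
  fix x y assume xy: "x \<in> fst B" "y \<in> fst B"
  have "g x \<in> fst T" "g y \<in> fst T" using g(2) xy by auto
  then have "(snd T E [g x, g y] \<longrightarrow> g x \<noteq> g y) \<and>
      (g x \<noteq> g y \<longrightarrow> snd T E [g x, g y] = (\<not> snd T E [g y, g x]))"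
    using assms(1) unfolding is_tournament_def by blast
  moreover have "g x = g y \<longleftrightarrow> x = y" using g(1) xy by (auto dest: inj_onD)
  ultimately show "(snd B E [x, y] \<longrightarrow> x \<noteq> y) \<and>
      (x \<noteq> y \<longrightarrow> snd B E [x, y] = (\<not> snd B E [y, x]))"
    using preserves_pair[OF g(3) _ assms(2)] xy by simp
qed

lemma tournament_no_edge_iff:
  assumes "is_tournament E T" "x \<in> fst T" "y \<in> fst T"
  shows "\<not> snd T E [x, y] \<and> \<not> snd T E [y, x] \<longleftrightarrow> x = y"
  using assms unfolding is_tournament_def by blast

lemma kernel_transversal:
  obtains R \<rho> where "R \<subseteq> X" "inj_on k R" "\<And>u. u \<in> X \<Longrightarrow> \<rho> u \<in> R \<and> k (\<rho> u) = k u"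
proof
  let ?\<rho> = "\<lambda>u. inv_into X k (k u)"
  show "?\<rho> ` X \<subseteq> X" by (auto intro: inv_into_into)
  show "?\<rho> u \<in> ?\<rho> ` X \<and> k (?\<rho> u) = k u" if "u \<in> X" for u
    using that by (simp add: f_inv_into_f)
  then show "inj_on k (?\<rho> ` X)" by (auto simp: inj_on_def)
qed

definition pullback_struct ::
  "'s set \<Rightarrow> ('s \<Rightarrow> nat) \<Rightarrow> 'a set \<Rightarrow> ('a \<Rightarrow> 'b) \<Rightarrow> ('b, 's) rstruct \<Rightarrow> ('a, 's) rstruct" where
  "pullback_struct L ar X \<phi> M =
     (X, \<lambda>s xs. s \<in> L \<and> length xs = ar s \<and> set xs \<subseteq> X \<and> snd M s (map \<phi> xs))"

lemma pullback_struct_in_age: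
  assumes "finite X" "inj_on \<phi> X" "\<phi> ` X \<subseteq> fst M"
  shows "pullback_struct L ar X \<phi> M \<in> age L ar M"
  using assms unfolding age_def embeds_def is_embedding_def
  by (auto simp: pullback_struct_def is_struct_def preserves_def intro!: exI[of _ \<phi>])

lemma reduct_pullback_struct:
  "L' \<subseteq> L \<Longrightarrow> reduct L' (pullback_struct L ar X \<phi> M) = pullback_struct L' ar X \<phi> M"
  by (auto simp: reduct_def pullback_struct_def)

lemma pullback_struct_reduct:
  "L \<subseteq> L' \<Longrightarrow> pullback_struct L ar X \<phi> (reduct L' M) = pullback_struct L ar X \<phi> M"
  by (auto simp: reduct_def pullback_struct_def)

lemma pullback_struct_cong:
  assumes "\<And>s xs. s \<in> L \<Longrightarrow> length xs = ar s \<Longrightarrow> set xs \<subseteq> X \<Longrightarrow>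
             snd M s (map \<phi> xs) \<longleftrightarrow> snd M s (map \<psi> xs)"
  shows "pullback_struct L ar X \<phi> M = pullback_struct L ar X \<psi> M"
  using assms by (fastforce simp: pullback_struct_def)

lemma pullback_struct_eq_struct:
  assumes "is_struct L ar A" "preserves L ar \<phi> (fst A) A M"
  shows "pullback_struct L ar (fst A) \<phi> M = A"
proof (rule prod_eqI)
  show "snd (pullback_struct L ar (fst A) \<phi> M) = snd A"
  proof (intro ext)
    fix s xs
    show "snd (pullback_struct L ar (fst A) \<phi> M) s xs = snd A s xs"
    proof (cases "s \<in> L \<and> length xs = ar s \<and> set xs \<subseteq> fst A")
      case True
      then show ?thesis using assms(2) unfolding pullback_struct_def preserves_def by simp
    next
      case False
      then show ?thesis using assms(1) unfolding pullback_struct_def is_struct_def by auto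
    qed
  qed
qed (simp add: pullback_struct_def)

lemma fst_blowup [simp]: "fst (blowup lt n M) = fst M \<times> {..<n}"
  by (simp add: blowup_def)

lemma snd_blowup_Inl:
  "snd (blowup lt n M) (Inl r) xs \<longleftrightarrow> set xs \<subseteq> fst M \<times> {..<n} \<and>
     (if r = lt then \<exists>x i y j. xs = [(x, i), (y, j)] \<and> (snd M lt [x, y] \<or> x = y \<and> i < j)
      else snd M r (map fst xs))"
  by (simp add: blowup_def)

lemma snd_blowup_Inr:
  "snd (blowup lt n M) (Inr i) xs \<longleftrightarrow> (\<exists>x. x \<in> fst M \<and> i < n \<and> xs = [(x, i)])"
  by (simp add: blowup_def)

lemma blowup_rel_transfer:
  assumes "s \<in> blowup_lang Ls n" "length xs = blowup_ar ar s" "set xs \<subseteq> X"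
    and "\<And>u. u \<in> X \<Longrightarrow> \<alpha> u \<in> fst M \<and> \<beta> u \<in> fst M \<and> l u < n"
    and "\<And>u v. u \<in> X \<Longrightarrow> v \<in> X \<Longrightarrow> \<alpha> u = \<alpha> v \<longleftrightarrow> \<beta> u = \<beta> v"
    and "\<And>r ys. r \<in> Ls \<Longrightarrow> length ys = ar r \<Longrightarrow> set ys \<subseteq> X \<Longrightarrow>
           snd M r (map \<alpha> ys) \<longleftrightarrow> snd M r (map \<beta> ys)"
    and "lt \<in> Ls" "ar lt = 2"
  shows "snd (blowup lt n M) s (map (\<lambda>u. (\<alpha> u, l u)) xs) \<longleftrightarrow>
         snd (blowup lt n M) s (map (\<lambda>u. (\<beta> u, l u)) xs)"
proof (cases s)
  case (Inl r)
  have r: "r \<in> Ls" using assms(1) Inl by (auto simp: blowup_lang_def)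
  have into: "set (map (\<lambda>u. (\<alpha> u, l u)) xs) \<subseteq> fst M \<times> {..<n}"
    "set (map (\<lambda>u. (\<beta> u, l u)) xs) \<subseteq> fst M \<times> {..<n}"
    using assms(3,4) by auto
  show ?thesis
  proof (cases "r = lt")
    case True
    then obtain u v where xs: "xs = [u, v]"
      using assms(2,8) Inl by (auto simp: blowup_ar_def length_eq_2_iff)
    have uv: "u \<in> X" "v \<in> X" using assms(3) xs by auto
    have "snd M lt [\<alpha> u, \<alpha> v] \<longleftrightarrow> snd M lt [\<beta> u, \<beta> v]"
      using assms(6)[of lt "[u, v]"] assms(7,8) uv by auto
    then show ?thesis using Inl True into xs assms(5)[OF uv] by (simp add: snd_blowup_Inl)
  next
    case False
    have "snd M r (map \<alpha> xs) \<longleftrightarrow> snd M r (map \<beta> xs)"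
      using assms(6)[OF r] assms(2,3) Inl by (simp add: blowup_ar_def)
    then show ?thesis using Inl False into by (simp add: snd_blowup_Inl comp_def)
  qed
next
  case (Inr i)
  then obtain u where "xs = [u]" "u \<in> X"
    using assms(2,3) by (auto simp: blowup_ar_def length_eq_1_iff)
  then show ?thesis using Inr assms(4) by (auto simp: snd_blowup_Inr)
qed

lemma is_embedding_via_blowup:
  fixes M :: "('t, 's) rstruct" and lt :: 's and n :: nat
  defines "BL \<equiv> blowup lt n M"
  assumes hs: "preserves (blowup_lang Ls n) (blowup_ar ar) hs (fst As) As BL"
      "inj_on hs (fst As)" "hs ` fst As \<subseteq> fst BL"
    and hb: "preserves (blowup_lang Ls n) (blowup_ar ar) hb (fst Bs) Bs BL"
    and F: "F ` fst As \<subseteq> fst Bs" "\<And>u. u \<in> fst As \<Longrightarrow> hb (F u) = (\<beta> u, snd (hs u))"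
    and \<beta>: "\<beta> ` fst As \<subseteq> fst M"
      "\<And>u v. u \<in> fst As \<Longrightarrow> v \<in> fst As \<Longrightarrow> fst (hs u) = fst (hs v) \<longleftrightarrow> \<beta> u = \<beta> v"
      "\<And>r ys. r \<in> Ls \<Longrightarrow> length ys = ar r \<Longrightarrow> set ys \<subseteq> fst As \<Longrightarrow>
         snd M r (map (\<lambda>u. fst (hs u)) ys) \<longleftrightarrow> snd M r (map \<beta> ys)"
    and "lt \<in> Ls" "ar lt = 2"
  shows "is_embedding (blowup_lang Ls n) (blowup_ar ar) F As Bs"
  unfolding is_embedding_def
proof (intro conjI)
  show "inj_on F (fst As)"
  proof (rule inj_onI)
    fix u v assume uv: "u \<in> fst As" "v \<in> fst As" "F u = F v"
    then have "\<beta> u = \<beta> v" "snd (hs u) = snd (hs v)" using F(2) by (metis prod.inject)+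
    then have "hs u = hs v" using \<beta>(2)[OF uv(1,2)] by (simp add: prod_eq_iff)
    then show "u = v" using hs(2) uv(1,2) by (auto dest: inj_onD)
  qed
  show "preserves (blowup_lang Ls n) (blowup_ar ar) F (fst As) As Bs"
    unfolding preserves_def
  proof (intro ballI allI impI)
    fix s xs assume s: "s \<in> blowup_lang Ls n" and xs: "length xs = blowup_ar ar s \<and> set xs \<subseteq> fst As"
    have "snd As s xs \<longleftrightarrow> snd BL s (map (\<lambda>u. (fst (hs u), snd (hs u))) xs)"
      using hs(1) s xs by (simp add: preserves_def)
    also have "\<dots> \<longleftrightarrow> snd BL s (map (\<lambda>u. (\<beta> u, snd (hs u))) xs)"
      unfolding BL_def
    proof (rule blowup_rel_transfer[where X = "fst As" and ar = ar and Ls = Ls])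
      show "fst (hs u) \<in> fst M \<and> \<beta> u \<in> fst M \<and> snd (hs u) < n" if "u \<in> fst As" for u
        using that hs(3) \<beta>(1) unfolding BL_def by (auto simp: mem_Times_iff)
    qed (use s xs \<beta>(2,3) assms(11,12) in auto)
    also have "map (\<lambda>u. (\<beta> u, snd (hs u))) xs = map hb (map F xs)"
      using xs F(2) by auto
    also have "snd BL s \<dots> \<longleftrightarrow> snd Bs s (map F xs)"
    proof -
      have "set (map F xs) \<subseteq> fst Bs" using xs F(1) by auto
      then show ?thesis using hb s xs unfolding preserves_def by simp
    qed
    finally show "snd As s xs \<longleftrightarrow> snd Bs s (map F xs)" .
  qed
qed (use F in simp)


locale tournament_blowup =
  fixes T Ts :: "('t, 's) rstruct" and E lt :: 's and Ls :: "'s set"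
    and ar :: "'s \<Rightarrow> nat" and n :: nat
  assumes ar_E: "ar E = 2" and tournament: "is_tournament E T"
    and E_in_Ls: "E \<in> Ls" and lt_in_Ls: "lt \<in> Ls" and E_neq_lt: "E \<noteq> lt" and ar_lt: "ar lt = 2"
    and reduct_Ts: "reduct {E} Ts = T" and n_pos: "0 < n"
begin

abbreviation BL :: "('t \<times> nat, 's + nat) rstruct" where
  "BL \<equiv> blowup lt n Ts"

lemma fst_Ts [simp]: "fst Ts = fst T"
  using reduct_Ts fst_reduct by metis

lemma snd_Ts_E: "snd Ts E xs \<longleftrightarrow> snd T E xs"
  using reduct_Ts snd_reduct by (metis singletonI)

lemma BL_edge:
  "a \<in> fst BL \<Longrightarrow> b \<in> fst BL \<Longrightarrow> snd BL (Inl E) [a, b] \<longleftrightarrow> snd T E [fst a, fst b]"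
  using E_neq_lt by (cases a, cases b) (auto simp: snd_blowup_Inl snd_Ts_E)

lemma BL_no_edge_iff:
  assumes "a \<in> fst BL" "b \<in> fst BL"
  shows "\<not> snd BL (Inl E) [a, b] \<and> \<not> snd BL (Inl E) [b, a] \<longleftrightarrow> fst a = fst b"
proof -
  have "fst a \<in> fst T" "fst b \<in> fst T" using assms by (auto simp: mem_Times_iff)
  then show ?thesis
    unfolding BL_edge[OF assms] BL_edge[OF assms(2,1)]
    by (rule tournament_no_edge_iff[OF tournament])
qed

lemma reduct_pullback_struct_Ts:
  "reduct {E} (pullback_struct Ls ar X \<phi> Ts) = pullback_struct {E} ar X \<phi> T"
proof -
  have "reduct {E} (pullback_struct Ls ar X \<phi> Ts) = pullback_struct {E} ar X \<phi> Ts"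
    using E_in_Ls by (simp add: reduct_pullback_struct)
  also have "\<dots> = pullback_struct {E} ar X \<phi> T"
    by (metis pullback_struct_reduct reduct_Ts order_refl)
  finally show ?thesis .
qed

definition edge_map :: "('a, 's + nat) rstruct \<Rightarrow> 'a set \<Rightarrow> ('a \<Rightarrow> 't \<times> nat) \<Rightarrow> bool" where
  "edge_map A X h \<longleftrightarrow> h ` X \<subseteq> fst BL \<and>
     (\<forall>u\<in>X. \<forall>v\<in>X. snd A (Inl E) [u, v] \<longleftrightarrow> snd BL (Inl E) [h u, h v])"

lemma edge_map_reduct [simp]: "edge_map (reduct {Inl E} A) X h \<longleftrightarrow> edge_map A X h"
  by (simp add: edge_map_def)

lemma edge_map_if_preserves:
  assumes "preserves L (blowup_ar ar) h X A BL" "Inl E \<in> L" "h ` X \<subseteq> fst BL"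
  shows "edge_map A X h"
  using assms ar_E preserves_pair[OF assms(1,2)] by (auto simp: edge_map_def blowup_ar_def)

lemma edge_map_edge:
  "edge_map A X h \<Longrightarrow> u \<in> X \<Longrightarrow> v \<in> X \<Longrightarrow> snd A (Inl E) [u, v] \<longleftrightarrow> snd T E [fst (h u), fst (h v)]"
  unfolding edge_map_def by (simp add: BL_edge image_subset_iff)

lemma edge_map_same_column:
  "edge_map A X h \<Longrightarrow> u \<in> X \<Longrightarrow> v \<in> X \<Longrightarrow>
     fst (h u) = fst (h v) \<longleftrightarrow> \<not> snd A (Inl E) [u, v] \<and> \<not> snd A (Inl E) [v, u]"
  unfolding edge_map_def by (simp add: BL_no_edge_iff image_subset_iff del: fst_blowup)

lemma edge_maps_same_column:
  "edge_map A X h \<Longrightarrow> edge_map A X h' \<Longrightarrow> u \<in> X \<Longrightarrow> v \<in> X \<Longrightarrow>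
     fst (h u) = fst (h v) \<longleftrightarrow> fst (h' u) = fst (h' v)"
  by (simp add: edge_map_same_column)

lemma quotient_expansion:
  assumes "edge_map A X h" "edge_map A X h'" "R \<subseteq> X" "finite R" "inj_on (fst \<circ> h) R"
  shows "pullback_struct Ls ar R (fst \<circ> h') Ts \<in> age Ls ar Ts"
    and "reduct {E} (pullback_struct Ls ar R (fst \<circ> h') Ts) = pullback_struct {E} ar R (fst \<circ> h) T"
proof -
  have "inj_on (fst \<circ> h') R"
    using assms(5) edge_maps_same_column[OF assms(1,2)] assms(3) unfolding inj_on_def
    by (metis comp_apply subsetD)
  moreover have "(fst \<circ> h') ` R \<subseteq> fst Ts"
    using assms(2,3) by (auto simp: edge_map_def image_subset_iff mem_Times_iff)
  ultimately show "pullback_struct Ls ar R (fst \<circ> h') Ts \<in> age Ls ar Ts"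
    by (rule pullback_struct_in_age[OF assms(4)])
  have "reduct {E} (pullback_struct Ls ar R (fst \<circ> h') Ts) = pullback_struct {E} ar R (fst \<circ> h') T"
    by (rule reduct_pullback_struct_Ts)
  also have "\<dots> = pullback_struct {E} ar R (fst \<circ> h) T"
  proof (rule pullback_struct_cong)
    fix s xs assume "s \<in> {E}" "length xs = ar s" "set xs \<subseteq> R"
    then obtain u v where "s = E" "xs = [u, v]" "u \<in> X" "v \<in> X"
      using ar_E assms(3) by (auto simp: length_eq_2_iff subset_iff)
    then show "snd T s (map (fst \<circ> h') xs) \<longleftrightarrow> snd T s (map (fst \<circ> h) xs)"
      using edge_map_edge[OF assms(1)] edge_map_edge[OF assms(2)] by simp
  qed
  finally show "reduct {E} (pullback_struct Ls ar R (fst \<circ> h') Ts) =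
    pullback_struct {E} ar R (fst \<circ> h) T" .
qed

text \<open>The E-reduct of B0[I_n], coded on \<nat> by prod_encode, since ages consist of structures on \<nat>.\<close>
definition nat_blowup :: "(nat, 's) rstruct \<Rightarrow> (nat, 's + nat) rstruct" where
  "nat_blowup B0 =
     (prod_encode ` (fst B0 \<times> {..<n}),
      \<lambda>s xs. s = Inl E \<and> length xs = 2 \<and> set xs \<subseteq> prod_encode ` (fst B0 \<times> {..<n}) \<and>
             snd B0 E (map (fst \<circ> prod_decode) xs))"

lemma nat_blowup_edge:
  "c \<in> fst B0 \<Longrightarrow> d \<in> fst B0 \<Longrightarrow> i < n \<Longrightarrow> j < n \<Longrightarrow>
     snd (nat_blowup B0) (Inl E) [prod_encode (c, i), prod_encode (d, j)] \<longleftrightarrow> snd B0 E [c, d]"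
  by (simp add: nat_blowup_def)

lemma nat_blowup_in_age:
  assumes "B0 \<in> age {E} ar T"
  shows "nat_blowup B0 \<in> age {Inl E} (blowup_ar ar) (reduct {Inl E} BL)"
proof -
  obtain g where g: "inj_on g (fst B0)" "g ` fst B0 \<subseteq> fst T" "preserves {E} ar g (fst B0) B0 T"
    and "finite (fst B0)"
    using assms by (auto simp: age_def embeds_def is_embedding_def)
  define k where "k = (\<lambda>u. (g (fst (prod_decode u)), snd (prod_decode u)))"
  have "is_embedding {Inl E} (blowup_ar ar) k (nat_blowup B0) BL"
    unfolding is_embedding_def preserves_def
  proof (intro conjI ballI allI impI)
    show "inj_on k (fst (nat_blowup B0))"
      using g(1) by (auto simp: inj_on_def k_def nat_blowup_def)
    show "k ` fst (nat_blowup B0) \<subseteq> fst BL"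
      using g(2) by (auto simp: k_def nat_blowup_def)
    fix s xs assume "s \<in> {Inl E}" "length xs = blowup_ar ar s \<and> set xs \<subseteq> fst (nat_blowup B0)"
    then obtain c i d j where "s = Inl E" "xs = [prod_encode (c, i), prod_encode (d, j)]"
      "c \<in> fst B0" "d \<in> fst B0" "i < n" "j < n"
      using ar_E by (auto simp: blowup_ar_def length_eq_2_iff nat_blowup_def)
    moreover from this have "g c \<in> fst T" "g d \<in> fst T" using g(2) by auto
    ultimately show "snd (nat_blowup B0) s xs \<longleftrightarrow> snd BL s (map k xs)"
      using preserves_pair[OF g(3) _ ar_E] by (simp add: nat_blowup_edge BL_edge k_def)
  qed
  moreover have "finite (fst (nat_blowup B0))" "is_struct {Inl E} (blowup_ar ar) (nat_blowup B0)"
    using \<open>finite (fst B0)\<close> ar_E by (auto simp: nat_blowup_def is_struct_def blowup_ar_def)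
  ultimately show ?thesis
    by (auto simp: age_def embeds_def is_embedding_def preserves_reduct_target)
qed

lemma nat_blowup_same_column:
  assumes "B0 \<in> age {E} ar T" "edge_map (nat_blowup B0) (fst (nat_blowup B0)) hb"
    and "c \<in> fst B0" "d \<in> fst B0" "i < n" "j < n"
  shows "fst (hb (prod_encode (c, i))) = fst (hb (prod_encode (d, j))) \<longleftrightarrow> c = d"
proof -
  have "is_tournament E B0" using tournament ar_E assms(1) by (rule is_tournament_age)
  moreover have "prod_encode (c, i) \<in> fst (nat_blowup B0)"
    "prod_encode (d, j) \<in> fst (nat_blowup B0)"
    using assms(3-6) by (simp_all add: nat_blowup_def)
  ultimately show ?thesis
    using assms(3-6) edge_map_same_column[OF assms(2)]
    by (simp add: nat_blowup_edge tournament_no_edge_iff)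
qed

lemma nat_blowup_expansion:
  assumes "B0 \<in> age {E} ar T" "edge_map (nat_blowup B0) (fst (nat_blowup B0)) hb"
  defines "\<phi> \<equiv> \<lambda>c. fst (hb (prod_encode (c, 0)))"
  shows "pullback_struct Ls ar (fst B0) \<phi> Ts \<in> age Ls ar Ts"
    and "reduct {E} (pullback_struct Ls ar (fst B0) \<phi> Ts) = B0"
proof -
  have enc: "prod_encode (c, 0) \<in> fst (nat_blowup B0)" if "c \<in> fst B0" for c
    using that n_pos by (simp add: nat_blowup_def)
  have "inj_on \<phi> (fst B0)"
    using nat_blowup_same_column[OF assms(1,2) _ _ n_pos n_pos] by (auto simp: inj_on_def \<phi>_def)
  moreover have "\<phi> ` fst B0 \<subseteq> fst Ts"
    using assms(2) enc by (force simp: edge_map_def \<phi>_def mem_Times_iff)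
  moreover have "finite (fst B0)" using assms(1) by (simp add: age_def)
  ultimately show "pullback_struct Ls ar (fst B0) \<phi> Ts \<in> age Ls ar Ts"
    by (intro pullback_struct_in_age)
  have "preserves {E} ar \<phi> (fst B0) B0 T"
    unfolding preserves_def
  proof (intro ballI allI impI)
    fix s xs assume "s \<in> {E}" "length xs = ar s \<and> set xs \<subseteq> fst B0"
    then obtain c d where "s = E" "xs = [c, d]" "c \<in> fst B0" "d \<in> fst B0"
      using ar_E by (auto simp: length_eq_2_iff)
    then show "snd B0 s xs \<longleftrightarrow> snd T s (map \<phi> xs)"
      using edge_map_edge[OF assms(2) enc enc] nat_blowup_edge[OF _ _ n_pos n_pos]
      by (simp add: \<phi>_def)
  qed
  moreover have "is_struct {E} ar B0" using assms(1) by (simp add: age_def)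
  ultimately have "pullback_struct {E} ar (fst B0) \<phi> T = B0"
    by (intro pullback_struct_eq_struct)
  then show "reduct {E} (pullback_struct Ls ar (fst B0) \<phi> Ts) = B0"
    by (simp add: reduct_pullback_struct_Ts)
qed

lemma nat_blowup_label_surj:
  assumes "B0 \<in> age {E} ar T" "edge_map (nat_blowup B0) (fst (nat_blowup B0)) hb"
    and "inj_on hb (fst (nat_blowup B0))" "c \<in> fst B0" "j < n"
  shows "\<exists>i<n. snd (hb (prod_encode (c, i))) = j"
proof -
  define m where "m i = snd (hb (prod_encode (c, i)))" for i
  have "inj_on m {..<n}"
  proof (rule inj_onI)
    fix i i' assume ii: "i \<in> {..<n}" "i' \<in> {..<n}" "m i = m i'"
    have "fst (hb (prod_encode (c, i))) = fst (hb (prod_encode (c, i')))"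
      using nat_blowup_same_column[OF assms(1,2,4,4)] ii(1,2) by blast
    then have "hb (prod_encode (c, i)) = hb (prod_encode (c, i'))"
      using ii(3) unfolding m_def by (rule prod_eqI)
    with ii(1,2) assms(3,4) show "i = i'"
      by (auto simp: nat_blowup_def prod_encode_eq dest: inj_onD)
  qed
  moreover have "m ` {..<n} \<subseteq> {..<n}"
    using assms(2,4) by (force simp: m_def edge_map_def nat_blowup_def mem_Times_iff)
  ultimately have "m ` {..<n} = {..<n}" by (intro endo_inj_surj) auto
  then have "j \<in> m ` {..<n}" using assms(5) by simp
  then show ?thesis unfolding m_def by blast
qed

lemma embedding_from_column_embedding:
  assumes hs: "preserves (blowup_lang Ls n) (blowup_ar ar) hs (fst As) As BL"
      "inj_on hs (fst As)" "hs ` fst As \<subseteq> fst BL"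
    and hb: "preserves (blowup_lang Ls n) (blowup_ar ar) hb (fst Bs) Bs BL" "inj_on hb (fst Bs)"
      "fst Bs = fst (nat_blowup B0)" "edge_map (nat_blowup B0) (fst (nat_blowup B0)) hb"
    and B0: "B0 \<in> age {E} ar T"
    and \<rho>: "\<And>u. u \<in> fst As \<Longrightarrow> \<rho> u \<in> R \<and> fst (hs (\<rho> u)) = fst (hs u)" "inj_on (fst \<circ> hs) R"
    and f: "inj_on f R" "f ` R \<subseteq> fst B0"
      "\<And>r ys. r \<in> Ls \<Longrightarrow> length ys = ar r \<Longrightarrow> set ys \<subseteq> R \<Longrightarrow>
         snd Ts r (map (fst \<circ> hs) ys) \<longleftrightarrow>
         snd Ts r (map (\<lambda>c. fst (hb (prod_encode (c, 0)))) (map f ys))"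
  shows "embeds (blowup_lang Ls n) (blowup_ar ar) As Bs"
proof -
  define \<phi> where "\<phi> c = fst (hb (prod_encode (c, 0)))" for c
  have column: "fst (hb (prod_encode (c, i))) = \<phi> c" if "c \<in> fst B0" "i < n" for c i
    using nat_blowup_same_column[OF B0 hb(4) that(1,1) that(2) n_pos] by (simp add: \<phi>_def)
  have \<phi>_inj: "inj_on \<phi> (fst B0)"
    using nat_blowup_same_column[OF B0 hb(4) _ _ n_pos n_pos] by (auto simp: inj_on_def \<phi>_def)
  obtain \<sigma> where \<sigma>: "\<And>c j. c \<in> fst B0 \<Longrightarrow> j < n \<Longrightarrow> \<sigma> c j < n \<and> snd (hb (prod_encode (c, \<sigma> c j))) = j"
    using nat_blowup_label_surj[OF B0 hb(4) hb(2)[unfolded hb(3)]] by metis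
  have f\<rho>: "f (\<rho> u) \<in> fst B0" and label: "snd (hs u) < n" if "u \<in> fst As" for u
    using \<rho>(1)[OF that] f(2) hs(3) that by (auto simp: mem_Times_iff)
  \<comment> \<open>u goes to the point of column f (\<rho> u) whose image under hb has the label of hs u\<close>
  define F where "F u = prod_encode (f (\<rho> u), \<sigma> (f (\<rho> u)) (snd (hs u)))" for u
  have "is_embedding (blowup_lang Ls n) (blowup_ar ar) F As Bs"
  proof (rule is_embedding_via_blowup[OF hs hb(1), where \<beta> = "\<phi> \<circ> f \<circ> \<rho>"])
    show "F ` fst As \<subseteq> fst Bs"
      using f\<rho> label \<sigma> by (auto simp: F_def hb(3) nat_blowup_def)
    show "hb (F u) = ((\<phi> \<circ> f \<circ> \<rho>) u, snd (hs u))" if "u \<in> fst As" for u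
      using column[OF f\<rho>[OF that]] \<sigma>[OF f\<rho>[OF that] label[OF that]] by (simp add: F_def prod_eq_iff)
    show "(\<phi> \<circ> f \<circ> \<rho>) ` fst As \<subseteq> fst Ts"
      using hb(4) f\<rho> n_pos by (force simp: \<phi>_def edge_map_def nat_blowup_def mem_Times_iff)
    show "fst (hs u) = fst (hs v) \<longleftrightarrow> (\<phi> \<circ> f \<circ> \<rho>) u = (\<phi> \<circ> f \<circ> \<rho>) v"
      if "u \<in> fst As" "v \<in> fst As" for u v
    proof -
      have "fst (hs u) = fst (hs v) \<longleftrightarrow> \<rho> u = \<rho> v"
        using \<rho>(2) \<rho>(1)[OF that(1)] \<rho>(1)[OF that(2)] unfolding inj_on_def by (metis comp_apply)
      also have "\<dots> \<longleftrightarrow> f (\<rho> u) = f (\<rho> v)"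
        using f(1) \<rho>(1) that by (auto dest: inj_onD)
      also have "\<dots> \<longleftrightarrow> \<phi> (f (\<rho> u)) = \<phi> (f (\<rho> v))"
        using \<phi>_inj f\<rho> that by (auto dest: inj_onD)
      finally show ?thesis by simp
    qed
    show "snd Ts r (map (\<lambda>u. fst (hs u)) ys) \<longleftrightarrow> snd Ts r (map (\<phi> \<circ> f \<circ> \<rho>) ys)"
      if "r \<in> Ls" "length ys = ar r" "set ys \<subseteq> fst As" for r ys
    proof -
      have "map (\<lambda>u. fst (hs u)) ys = map (fst \<circ> hs) (map \<rho> ys)"
        using \<rho>(1) that(3) by auto
      also have "snd Ts r \<dots> \<longleftrightarrow> snd Ts r (map \<phi> (map f (map \<rho> ys)))"
        unfolding \<phi>_def using \<rho>(1) that by (intro f(3)) auto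
      finally show ?thesis by (simp add: comp_assoc)
    qed
  qed (use lt_in_Ls ar_lt in auto)
  then show ?thesis by (auto simp: embeds_def)
qed

lemma embeds_expansions:
  assumes As: "As \<in> age (blowup_lang Ls n) (blowup_ar ar) BL"
    and Bs: "Bs \<in> age (blowup_lang Ls n) (blowup_ar ar) BL" "reduct {Inl E} Bs = nat_blowup B0"
    and B0: "B0 \<in> age {E} ar T"
    and h: "edge_map As (fst As) h" "inj_on (fst \<circ> h) R" "R \<subseteq> fst As"
    and \<rho>: "\<And>u. u \<in> fst As \<Longrightarrow> \<rho> u \<in> R \<and> fst (h (\<rho> u)) = fst (h u)"
    and expansion: "\<And>A0s B0s. A0s \<in> age Ls ar Ts \<Longrightarrow> B0s \<in> age Ls ar Ts \<Longrightarrow>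
      reduct {E} A0s = pullback_struct {E} ar R (fst \<circ> h) T \<Longrightarrow> reduct {E} B0s = B0 \<Longrightarrow>
      embeds Ls ar A0s B0s"
  shows "embeds (blowup_lang Ls n) (blowup_ar ar) As Bs"
proof -
  have E_in: "Inl E \<in> blowup_lang Ls n" using E_in_Ls by (simp add: blowup_lang_def)
  obtain hs where hs: "preserves (blowup_lang Ls n) (blowup_ar ar) hs (fst As) As BL"
    "inj_on hs (fst As)" "hs ` fst As \<subseteq> fst BL"
    using As by (auto simp: age_def embeds_def is_embedding_def)
  obtain hb where hb: "preserves (blowup_lang Ls n) (blowup_ar ar) hb (fst Bs) Bs BL"
    "inj_on hb (fst Bs)" "hb ` fst Bs \<subseteq> fst BL"
    using Bs(1) by (auto simp: age_def embeds_def is_embedding_def)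
  have fst_Bs: "fst Bs = fst (nat_blowup B0)" by (metis Bs(2) fst_reduct)
  have hs_edge: "edge_map As (fst As) hs" by (rule edge_map_if_preserves[OF hs(1) E_in hs(3)])
  have hb_edge: "edge_map (nat_blowup B0) (fst (nat_blowup B0)) hb"
    using edge_map_if_preserves[OF hb(1) E_in hb(3)] Bs(2) fst_Bs by (metis edge_map_reduct)
  have same_column: "fst (hs u) = fst (hs v) \<longleftrightarrow> fst (h u) = fst (h v)"
    if "u \<in> fst As" "v \<in> fst As" for u v
    using edge_maps_same_column[OF hs_edge h(1) that] .
  have \<rho>_hs: "\<rho> u \<in> R \<and> fst (hs (\<rho> u)) = fst (hs u)" if "u \<in> fst As" for u
    using \<rho>[OF that] h(3) that same_column by blast
  have "inj_on (fst \<circ> hs) R"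
    using h(2,3) same_column unfolding inj_on_def by (metis comp_apply subsetD)
  moreover have "finite R" using As h(3) by (auto simp: age_def intro: finite_subset)
  then obtain f where "inj_on f R" "f ` R \<subseteq> fst B0"
    "preserves Ls ar f R (pullback_struct Ls ar R (fst \<circ> hs) Ts)
       (pullback_struct Ls ar (fst B0) (\<lambda>c. fst (hb (prod_encode (c, 0)))) Ts)"
    using expansion[OF quotient_expansion(1)[OF h(1) hs_edge h(3)]
        nat_blowup_expansion(1)[OF B0 hb_edge] quotient_expansion(2)[OF h(1) hs_edge h(3)]
        nat_blowup_expansion(2)[OF B0 hb_edge]] h(2)
    unfolding embeds_def is_embedding_def by (auto simp: pullback_struct_def)
  moreover from this have "snd Ts r (map (fst \<circ> hs) ys) \<longleftrightarrow>
      snd Ts r (map (\<lambda>c. fst (hb (prod_encode (c, 0)))) (map f ys))"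
    if "r \<in> Ls" "length ys = ar r" "set ys \<subseteq> R" for r ys
  proof -
    have "f ` set ys \<subseteq> fst B0" using \<open>f ` R \<subseteq> fst B0\<close> that(3) by auto
    then show ?thesis using that \<open>preserves Ls ar f R _ _\<close>
      unfolding preserves_def pullback_struct_def by auto
  qed
  ultimately show ?thesis
    using embedding_from_column_embedding[OF hs hb(1,2) fst_Bs hb_edge B0 \<rho>_hs] by blast
qed

theorem expansion_property_blowup:
  assumes "expansion_property {E} Ls ar (age {E} ar T) (age Ls ar Ts)"
  shows "expansion_property {Inl E} (blowup_lang Ls n) (blowup_ar ar)
           (age {Inl E} (blowup_ar ar) (reduct {Inl E} BL))
           (age (blowup_lang Ls n) (blowup_ar ar) BL)"
  unfolding expansion_property_def
proof
  fix A assume "A \<in> age {Inl E} (blowup_ar ar) (reduct {Inl E} BL)"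
  then obtain h where "preserves {Inl E} (blowup_ar ar) h (fst A) A BL" "h ` fst A \<subseteq> fst BL"
    and "finite (fst A)"
    by (auto simp: age_def embeds_def is_embedding_def preserves_reduct_target)
  then have h: "edge_map A (fst A) h" by (intro edge_map_if_preserves) auto
  obtain R \<rho> where R: "R \<subseteq> fst A" "inj_on (fst \<circ> h) R"
    and \<rho>: "\<And>u. u \<in> fst A \<Longrightarrow> \<rho> u \<in> R \<and> fst (h (\<rho> u)) = fst (h u)"
    using kernel_transversal[where X = "fst A" and k = "fst \<circ> h"] by (metis comp_apply)
  have "pullback_struct {E} ar R (fst \<circ> h) T \<in> age {E} ar T"
    using h R \<open>finite (fst A)\<close>
    by (intro pullback_struct_in_age)
      (auto simp: edge_map_def image_subset_iff mem_Times_iff intro: finite_subset)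
  then obtain B0 where B0: "B0 \<in> age {E} ar T"
    and expansion: "\<forall>A0s\<in>age Ls ar Ts. \<forall>B0s\<in>age Ls ar Ts.
       reduct {E} A0s = pullback_struct {E} ar R (fst \<circ> h) T \<longrightarrow> reduct {E} B0s = B0 \<longrightarrow>
       embeds Ls ar A0s B0s"
    using assms unfolding expansion_property_def by blast
  show "\<exists>B\<in>age {Inl E} (blowup_ar ar) (reduct {Inl E} BL).
          \<forall>As\<in>age (blowup_lang Ls n) (blowup_ar ar) BL.
          \<forall>Bs\<in>age (blowup_lang Ls n) (blowup_ar ar) BL.
            reduct {Inl E} As = A \<longrightarrow> reduct {Inl E} Bs = B \<longrightarrow>
            embeds (blowup_lang Ls n) (blowup_ar ar) As Bs"
  proof (intro bexI[OF _ nat_blowup_in_age[OF B0]] ballI impI)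
    fix As Bs
    assume As: "As \<in> age (blowup_lang Ls n) (blowup_ar ar) BL"
      and Bs: "Bs \<in> age (blowup_lang Ls n) (blowup_ar ar) BL"
      and "reduct {Inl E} As = A" "reduct {Inl E} Bs = nat_blowup B0"
    moreover from this have "fst As = fst A" "edge_map As (fst As) h"
      using h by (metis fst_reduct edge_map_reduct)+
    ultimately show "embeds (blowup_lang Ls n) (blowup_ar ar) As Bs"
      using embeds_expansions[OF As Bs _ B0 _ R(2) _ \<rho>] expansion R(1) by auto
  qed
qed

end

theorem theorem4p3:
  fixes T Ts :: "('t, 's) rstruct" and E lt :: 's and Ls :: "'s set"
    and ar :: "'s \<Rightarrow> nat" and n :: nat
  assumes "countable (fst T)"
    and "ar E = 2" and "is_struct {E} ar T"
    and "is_tournament E T" and "homogeneous {E} ar T"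
    and "countable Ls" and "E \<in> Ls" and "lt \<in> Ls" and "E \<noteq> lt" and "ar lt = 2"
    and "is_struct Ls ar Ts" and "reduct {E} Ts = T"
    and "strict_linear_order_on (fst T) (\<lambda>x y. snd Ts lt [x, y])"
    and "expansion_property {E} Ls ar (age {E} ar T) (age Ls ar Ts)"
    and "n > 0"
  shows "expansion_property {Inl E} (blowup_lang Ls n) (blowup_ar ar)
           (age {Inl E} (blowup_ar ar) (reduct {Inl E} (blowup lt n Ts)))
           (age (blowup_lang Ls n) (blowup_ar ar) (blowup lt n Ts))"
proof -
  interpret tournament_blowup T Ts E lt Ls ar n
    by (simp add: tournament_blowup_def assms(2,4,7-10,12,15))
  show ?thesis using expansion_property_blowup[OF assms(14)] .
qed

end
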